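(* There is no pair $(\Lambda,\Lambda')$, where $\Lambda$ is a well-rounded lattice of rank $9$ in a $9$-dimensional Euclidean space and $\Lambda'$ is a sublattice generated by $9$ linearly independent minimal vectors of $\Lambda$, such that $\Lambda/\Lambda'\cong(\mathbb Z/3\mathbb Z)^3$.
   Context: Minimal vectors of a lattice are its nonzero vectors of smallest norm $x\cdot x$; a lattice is well-rounded if its minimal vectors span the ambient space. *)

theory Defs
  imports "HOL-Analysis.Analysis" "HOL-Algebra.Elementary_Groups" "HOL-Algebra.Product_Groups"
begin

definition int_lattice :: "('i::finite \<Rightarrow> 'a::real_vector) \<Rightarrow> 'a set" where
  "int_lattice b = range (\<lambda>c::'i \<Rightarrow> int. \<Sum>i\<in>UNIV. of_int (c i) *\<^sub>R b i)"

definition lin_indep_family :: "('i \<Rightarrow> 'a::real_vector) \<Rightarrow> bool" where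
  "lin_indep_family b \<longleftrightarrow> inj b \<and> independent (range b)"

definition min_vectors :: "'a::real_inner set \<Rightarrow> 'a set" where
  "min_vectors L = {v \<in> L. v \<noteq> 0 \<and> (\<forall>w\<in>L. w \<noteq> 0 \<longrightarrow> v \<bullet> v \<le> w \<bullet> w)}"

definition well_rounded :: "'a::euclidean_space set \<Rightarrow> bool" where
  "well_rounded L \<longleftrightarrow> span (min_vectors L) = UNIV"

definition add_group :: "'a::ab_group_add set \<Rightarrow> 'a monoid" where
  "add_group L = \<lparr>carrier = L, monoid.mult = (+), one = 0\<rparr>"

end

theory Submission
  imports Defs
begin

(*
  Let N be spanned by nine independent minimal vectors v_i of norm m and suppose L/N is
  (Z/3Z)^3. Then 3L is contained in N, so L consists of the vectors (1/3) \<Sum> k_i v_i whose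
  residues k mod 3 lie in a 3-dimensional ternary code C of length 9. If such a vector W has all
  k_i in {-1, 0, 1}, minimality of v_i applied to W - k_i v_i gives 2 k_i (W \<bullet> v_i) \<le> W \<bullet> W,
  and summing over the support shows that every nonzero codeword has weight at least 6.
  Counting zeros of the 27 linear functionals on the columns of a generator matrix (a second
  moment argument) shows that a ternary [9,3,6] code is, up to signs and a relabelling of the
  coordinates, the code of affine functions on the plane F_3^2. Thirteen suitable lifts of its
  codewords are nonzero vectors of L whose squared norms, weighted by 1 or 3, add up to 20 m,
  although the weights add up to 21 and each norm is at least m.
*)

datatype f3 = Z0 | Z1 | Z2

lemma UNIV_f3: "(UNIV :: f3 set) = {Z0, Z1, Z2}"
  using f3.exhaust by auto

instantiation f3 :: "{field, finite}"
begin

definition zero_f3 :: f3 where "zero_f3 = Z0"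
definition one_f3 :: f3 where "one_f3 = Z1"

fun plus_f3 :: "f3 \<Rightarrow> f3 \<Rightarrow> f3" where
  "plus_f3 Z0 y = y" | "plus_f3 x Z0 = x" | "plus_f3 Z1 Z1 = Z2" | "plus_f3 Z1 Z2 = Z0"
| "plus_f3 Z2 Z1 = Z0" | "plus_f3 Z2 Z2 = Z1"

fun uminus_f3 :: "f3 \<Rightarrow> f3" where
  "uminus_f3 Z0 = Z0" | "uminus_f3 Z1 = Z2" | "uminus_f3 Z2 = Z1"

definition minus_f3 :: "f3 \<Rightarrow> f3 \<Rightarrow> f3" where "minus_f3 x y = x + - y"

fun times_f3 :: "f3 \<Rightarrow> f3 \<Rightarrow> f3" where
  "times_f3 Z0 y = Z0" | "times_f3 x Z0 = Z0" | "times_f3 Z1 y = y" | "times_f3 x Z1 = x"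
| "times_f3 Z2 Z2 = Z1"

definition inverse_f3 :: "f3 \<Rightarrow> f3" where "inverse_f3 x = x"

definition divide_f3 :: "f3 \<Rightarrow> f3 \<Rightarrow> f3" where "divide_f3 x y = x * y"

instance
proof
  fix a b c :: f3
  note zero_f3_def [simp] one_f3_def [simp]
  show "a * b * c = a * (b * c)" by (cases a; cases b; cases c) simp_all
  show "a * b = b * a" by (cases a; cases b) simp_all
  show "1 * a = a" by (cases a) simp_all
  show "a + b + c = a + (b + c)" by (cases a; cases b; cases c) simp_all
  show "a + b = b + a" by (cases a; cases b) simp_all
  show "0 + a = a" by simp
  show "- a + a = 0" by (cases a) simp_all
  show "a - b = a + - b" by (simp add: minus_f3_def)
  show "(a + b) * c = a * c + b * c" by (cases a; cases b; cases c) simp_all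
  show "(0::f3) \<noteq> 1" by simp
  show "a \<noteq> 0 \<Longrightarrow> inverse a * a = (1::f3)" by (cases a) (simp_all add: inverse_f3_def)
  show "divide a b = a * inverse b" by (simp add: divide_f3_def inverse_f3_def)
  show "inverse (0::f3) = 0" by (simp add: inverse_f3_def)
  show "finite (UNIV :: f3 set)" by (simp add: UNIV_f3)
qed

end

lemma f3_square: "x \<noteq> 0 \<Longrightarrow> x * x = (1 :: f3)"
  by (cases x) (simp_all add: zero_f3_def one_f3_def)

lemma two_f3: "(2 :: f3) = Z2"
  by (simp only: numeral_Bit0 numeral_One one_f3_def plus_f3.simps)

lemma three_f3: "(3 :: f3) = 0"
  by (simp only: numeral_Bit1 numeral_One one_f3_def plus_f3.simps zero_f3_def)

lemma of_int_f3_mod: "(of_int k :: f3) = of_int (k mod 3)"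
proof -
  have "(of_int k :: f3) = of_int (k div 3) * 3 + of_int (k mod 3)"
    by (metis div_mult_mod_eq of_int_add of_int_mult of_int_numeral)
  then show ?thesis
    by (simp add: three_f3)
qed

lemma of_int_f3_cases:
  "(of_int k = (0 :: f3) \<and> k mod 3 = 0) \<or> (of_int k = Z1 \<and> k mod 3 = 1) \<or> (of_int k = Z2 \<and> k mod 3 = 2)"
proof -
  have "k mod 3 = 0 \<or> k mod 3 = 1 \<or> k mod 3 = 2"
    by presburger
  then show ?thesis
    by (auto simp: of_int_f3_mod[of k] one_f3_def two_f3)
qed

lemma of_int_f3_eq_0_iff: "(of_int k :: f3) = 0 \<longleftrightarrow> 3 dvd k"
  using of_int_f3_cases[of k] by (auto simp: zero_f3_def)

fun lift_f3 :: "f3 \<Rightarrow> int" where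
  "lift_f3 Z0 = 0" | "lift_f3 Z1 = 1" | "lift_f3 Z2 = - 1"

lemma of_int_lift_f3 [simp]: "of_int (lift_f3 x) = x"
  by (cases x) (simp_all add: zero_f3_def one_f3_def)

lemma lift_f3_cases: "lift_f3 x \<in> {- 1, 0, 1}"
  by (cases x) simp_all

lemma lift_f3_eq_0_iff [simp]: "lift_f3 x = 0 \<longleftrightarrow> x = 0"
  by (cases x) (simp_all add: zero_f3_def)

lemma lift_f3_mult: "lift_f3 (x * y) = lift_f3 x * lift_f3 y"
  by (cases x; cases y) simp_all

lemma lift_f3_of_int: "3 dvd (lift_f3 (of_int k) - k)"
  using of_int_f3_cases[of k] by (elim disjE conjE) (simp_all add: zero_f3_def, presburger+)

type_synonym f3vec = "f3 \<times> f3 \<times> f3"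

fun dot3 :: "f3vec \<Rightarrow> f3vec \<Rightarrow> f3" where
  "dot3 (a, b, c) (x, y, z) = a * x + b * y + c * z"

fun scale3 :: "f3 \<Rightarrow> f3vec \<Rightarrow> f3vec" where
  "scale3 s (x, y, z) = (s * x, s * y, s * z)"

fun affine_f3 :: "f3vec \<Rightarrow> f3 \<times> f3 \<Rightarrow> f3" where
  "affine_f3 (\<alpha>, \<beta>, \<gamma>) (x, y) = \<alpha> * x + \<beta> * y + \<gamma>"

lemma dot3_add_left: "dot3 (f + g) t = dot3 f t + dot3 g t"
  by (cases f rule: prod_cases3; cases g rule: prod_cases3; cases t rule: prod_cases3)
     (simp add: algebra_simps)

lemma dot3_scale3_left: "dot3 (scale3 s f) t = s * dot3 f t"
  by (cases f rule: prod_cases3; cases t rule: prod_cases3) (simp add: algebra_simps)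

lemma dot3_scale3_right: "dot3 f (scale3 s t) = s * dot3 f t"
  by (cases f rule: prod_cases3; cases t rule: prod_cases3) (simp add: algebra_simps)

lemma scale3_scale3: "scale3 s (scale3 s' t) = scale3 (s * s') t"
  by (cases t rule: prod_cases3) (simp add: mult.assoc)

lemma scale3_one: "scale3 1 t = t"
  by (cases t rule: prod_cases3) simp

definition f3_list :: "f3 list" where
  "f3_list = [Z0, Z1, Z2]"

definition f3vec_list :: "f3vec list" where
  "f3vec_list = [(a, b, c). a \<leftarrow> f3_list, b \<leftarrow> f3_list, c \<leftarrow> f3_list]"

lemma mem_f3_list: "x \<in> set f3_list"
  by (cases x) (simp_all add: f3_list_def)

lemma set_f3vec_list: "set f3vec_list = UNIV"
  using mem_f3_list by (auto simp: f3vec_list_def)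

lemma card_f3vec: "card {t. P t} = length (filter P f3vec_list)"
proof -
  have "distinct f3vec_list"
    by code_simp
  then have "card (set (filter P f3vec_list)) = length (filter P f3vec_list)"
    by (intro distinct_card distinct_filter)
  moreover have "set (filter P f3vec_list) = {t. P t}"
    by (simp add: set_f3vec_list)
  ultimately show ?thesis
    by simp
qed

lemma list_all_f3vec: "list_all P f3vec_list \<longleftrightarrow> (\<forall>t. P t)"
  by (simp add: list_all_iff set_f3vec_list)

lemma card_annihilator: "card {f. dot3 f t = 0} = (if t = 0 then 27 else 9)"
proof -
  have "list_all (\<lambda>t. length (filter (\<lambda>f. dot3 f t = 0) f3vec_list) = (if t = 0 then 27 else 9))
    f3vec_list"
    by code_simp
  then show ?thesis
    unfolding list_all_f3vec card_f3vec by (rule spec)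
qed

lemma card_common_annihilator:
  fixes t t' :: f3vec
  defines "A \<equiv> card {f. dot3 f t = 0} + card {f. dot3 f t' = 0}"
    and "B \<equiv> card {f. dot3 f t = 0 \<and> dot3 f t' = 0}"
  shows "A \<le> 6 * B" and "A = 6 * B \<Longrightarrow> t \<noteq> 0 \<and> t' \<noteq> scale3 s t"
proof -
  define ok where "ok t t' \<longleftrightarrow>
    (let A = length (filter (\<lambda>f. dot3 f t = 0) f3vec_list) + length (filter (\<lambda>f. dot3 f t' = 0) f3vec_list);
         B = length (filter (\<lambda>f. dot3 f t = 0 \<and> dot3 f t' = 0) f3vec_list)
     in A \<le> 6 * B \<and> (A = 6 * B \<longrightarrow> t \<noteq> 0 \<and> list_all (\<lambda>s. t' \<noteq> scale3 s t) f3_list))"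
    for t t' :: f3vec
  have "list_all (\<lambda>t. list_all (ok t) f3vec_list) f3vec_list"
    unfolding ok_def by code_simp
  then have "ok t t'"
    unfolding list_all_f3vec by blast
  moreover have "list_all P f3_list \<longleftrightarrow> (\<forall>s. P s)" for P
    using mem_f3_list by (auto simp: list_all_iff)
  ultimately show "A \<le> 6 * B" "A = 6 * B \<Longrightarrow> t \<noteq> 0 \<and> t' \<noteq> scale3 s t"
    unfolding ok_def A_def B_def card_f3vec Let_def by simp_all
qed

lemma card_nonzero_f3vec: "card {f :: f3vec. f \<noteq> 0} = 26"
  unfolding card_f3vec by code_simp

lemma affine_plane_coordinates:
  assumes "fu \<noteq> 0"
  obtains fx fy where "inj_on (\<lambda>n. (dot3 fx n, dot3 fy n)) {n. dot3 fu n = 1}"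
proof -
  obtain a b c where fu: "fu = (a, b, c)"
    by (cases fu)
  consider "a \<noteq> 0" | "a = 0" "b \<noteq> 0" | "a = 0" "b = 0" "c \<noteq> 0"
    using assms fu by (auto simp: zero_prod_def)
  then show ?thesis
  proof cases
    case 1
    then show ?thesis
      by (intro that[of "(0, 1, 0)" "(0, 0, 1)"])
         (auto simp: inj_on_def fu add.assoc, metis add_right_cancel mult_left_cancel zero_f3_def)
  next
    case 2
    then show ?thesis
      by (intro that[of "(1, 0, 0)" "(0, 0, 1)"])
         (auto simp: inj_on_def fu add.assoc, metis add_right_cancel mult_left_cancel zero_f3_def)
  next
    case 3
    then show ?thesis
      by (intro that[of "(1, 0, 0)" "(0, 1, 0)"])
         (auto simp: inj_on_def fu add.assoc, metis add_right_cancel mult_left_cancel zero_f3_def)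
  qed
qed

lemma card_eq_sum_of_bool: "card {y :: 'b::finite. P y} = (\<Sum>y\<in>UNIV. of_bool (P y))"
  by simp

lemma sum_card_swap:
  fixes R :: "'a::finite \<Rightarrow> 'b::finite \<Rightarrow> bool"
  shows "(\<Sum>x\<in>UNIV. card {y. R x y}) = (\<Sum>y\<in>UNIV. card {x. R x y})"
  unfolding card_eq_sum_of_bool by (rule sum.swap)

lemma sum_card_squared:
  fixes R :: "'a::finite \<Rightarrow> 'b::finite \<Rightarrow> bool"
  shows "(\<Sum>x\<in>UNIV. (card {y. R x y})\<^sup>2) = (\<Sum>y\<in>UNIV. \<Sum>z\<in>UNIV. card {x. R x y \<and> R x z})"
proof -
  have "(\<Sum>x\<in>UNIV. (card {y. R x y})\<^sup>2) =
      (\<Sum>x\<in>UNIV. \<Sum>y\<in>UNIV. \<Sum>z\<in>UNIV. of_bool (R x y \<and> R x z))"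
    unfolding card_eq_sum_of_bool power2_eq_square sum_product of_bool_conj ..
  also have "\<dots> = (\<Sum>y\<in>UNIV. \<Sum>x\<in>UNIV. \<Sum>z\<in>UNIV. of_bool (R x y \<and> R x z))"
    by (rule sum.swap)
  also have "\<dots> = (\<Sum>y\<in>UNIV. \<Sum>z\<in>UNIV. \<Sum>x\<in>UNIV. of_bool (R x y \<and> R x z))"
    by (rule sum.cong[OF refl], rule sum.swap)
  finally show ?thesis
    unfolding card_eq_sum_of_bool .
qed

(* The columns of a generator matrix of a ternary [9,3,6] code: the codeword of the functional f
   is p \<mapsto> dot3 f (col p). *)
locale ternary_code_9_3_6 =
  fixes col :: "'p::finite \<Rightarrow> f3vec"
  assumes card_index: "CARD('p) = 9"
    and few_zeros: "f \<noteq> 0 \<Longrightarrow> card {p. dot3 f (col p) = 0} \<le> 3"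
begin

definition zeros :: "f3vec \<Rightarrow> int" where
  "zeros f = int (card {p. dot3 f (col p) = 0})"

definition excess :: "'p \<Rightarrow> 'p \<Rightarrow> int" where
  "excess p q = 6 * int (card {f. dot3 f (col p) = 0 \<and> dot3 f (col q) = 0})
     - int (card {f. dot3 f (col p) = 0}) - int (card {f. dot3 f (col q) = 0})"

lemma excess_nonneg: "0 \<le> excess p q"
  using card_common_annihilator(1)[of "col p" "col q"] by (simp add: excess_def)

lemma excess_diag: "36 \<le> excess p p"
  using card_annihilator[of "col p"] by (simp add: excess_def)

lemma zeros_zero: "zeros 0 = 9"
proof -
  have "dot3 0 t = 0" for t
    by (cases t rule: prod_cases3) (simp add: zero_prod_def)
  then show ?thesis
    using card_index by (simp add: zeros_def)
qed

lemma zeros_deficit_nonneg: "f \<noteq> 0 \<Longrightarrow> 0 \<le> zeros f * (3 - zeros f)"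
  using few_zeros by (simp add: zeros_def)

lemma sum_zeros_deficit_nonneg: "0 \<le> (\<Sum>f\<in>UNIV - {0}. zeros f * (3 - zeros f))"
  by (rule sum_nonneg) (simp add: zeros_deficit_nonneg)

(* Double counting over the 27 functionals f: the left-hand side is 6 \<Sum>\<^sub>f z f (z f - 3) with
   z = zeros; its term for f = 0 is 324, already the least possible value of \<Sum>\<^sub>p excess p p. *)
lemma sum_excess:
  "(\<Sum>p\<in>UNIV. \<Sum>q\<in>UNIV. excess p q) = 324 - 6 * (\<Sum>f\<in>UNIV - {0}. zeros f * (3 - zeros f))"
proof -
  define A where "A p = int (card {f. dot3 f (col p) = 0})" for p
  define B where "B p q = int (card {f. dot3 f (col p) = 0 \<and> dot3 f (col q) = 0})" for p q
  have "(\<Sum>p\<in>UNIV. \<Sum>q\<in>UNIV. excess p q) =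
      6 * (\<Sum>p\<in>UNIV. \<Sum>q\<in>UNIV. B p q) - 18 * (\<Sum>p\<in>UNIV. A p)"
    using card_index
    by (simp add: excess_def A_def B_def sum_subtractf sum_distrib_left sum_negf
        sum.swap[of "\<lambda>p q. A q"])
  also have "(\<Sum>p\<in>UNIV. \<Sum>q\<in>UNIV. B p q) = (\<Sum>f\<in>UNIV. (zeros f)\<^sup>2)"
    using sum_card_squared[of "\<lambda>f p. dot3 f (col p) = 0"]
    by (simp add: B_def zeros_def flip: of_nat_sum of_nat_power)
  also have "(\<Sum>p\<in>UNIV. A p) = (\<Sum>f\<in>UNIV. zeros f)"
    using sum_card_swap[of "\<lambda>f p. dot3 f (col p) = 0"]
    by (simp add: A_def zeros_def flip: of_nat_sum)
  also have "6 * (\<Sum>f\<in>UNIV. (zeros f)\<^sup>2) - 18 * (\<Sum>f\<in>UNIV. zeros f) =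
      6 * (\<Sum>f\<in>UNIV. zeros f * (zeros f - 3))"
    by (simp add: power2_eq_square right_diff_distrib sum_subtractf sum_distrib_left)
  also have "(\<Sum>f\<in>UNIV. zeros f * (zeros f - 3)) = 54 - (\<Sum>f\<in>UNIV - {0}. zeros f * (3 - zeros f))"
    by (simp add: sum.remove[of UNIV 0] zeros_zero right_diff_distrib sum_subtractf)
  finally show ?thesis
    by simp
qed

lemma sum_excess_pairs: "(\<Sum>x\<in>S. excess (fst x) (snd x)) \<le> (\<Sum>p\<in>UNIV. \<Sum>q\<in>UNIV. excess p q)"
proof -
  have "(\<Sum>x\<in>S. excess (fst x) (snd x)) \<le> (\<Sum>x\<in>UNIV. excess (fst x) (snd x))"
    by (rule sum_mono2) (simp_all add: excess_nonneg)
  also have "\<dots> = (\<Sum>p\<in>UNIV. \<Sum>q\<in>UNIV. excess p q)"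
    by (simp add: sum.cartesian_product split_def flip: UNIV_Times_UNIV)
  finally show ?thesis .
qed

lemma sum_excess_diag: "324 \<le> (\<Sum>x\<in>range (\<lambda>p. (p, p)). excess (fst x) (snd x))"
proof -
  have "(\<Sum>p\<in>(UNIV :: 'p set). 36) \<le> (\<Sum>p\<in>UNIV. excess p p)"
    by (rule sum_mono) (rule excess_diag)
  then show ?thesis
    using card_index by (simp add: sum.reindex inj_on_def)
qed

lemma excess_offdiag: "p \<noteq> q \<Longrightarrow> excess p q = 0"
proof -
  assume "p \<noteq> q"
  then have "(p, q) \<notin> range (\<lambda>p. (p, p))"
    by auto
  then have "324 + excess p q \<le> (\<Sum>x\<in>insert (p, q) (range (\<lambda>p. (p, p))). excess (fst x) (snd x))"
    using sum_excess_diag by simp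
  also have "\<dots> \<le> 324 - 6 * (\<Sum>f\<in>UNIV - {0}. zeros f * (3 - zeros f))"
    using sum_excess_pairs by (simp only: sum_excess)
  also have "\<dots> \<le> 324"
    using sum_zeros_deficit_nonneg by simp
  finally show ?thesis
    using excess_nonneg[of p q] by simp
qed

lemma zeros_0_or_3: "f \<noteq> 0 \<Longrightarrow> zeros f = 0 \<or> zeros f = 3"
proof -
  assume "f \<noteq> 0"
  have "(\<Sum>g\<in>UNIV - {0}. zeros g * (3 - zeros g)) \<le> 0"
    using sum_excess_pairs[of "range (\<lambda>p. (p, p))"] sum_excess_diag by (simp add: sum_excess)
  then have "(\<Sum>g\<in>UNIV - {0}. zeros g * (3 - zeros g)) = 0"
    using sum_zeros_deficit_nonneg by (rule order_antisym)
  then have "zeros f * (3 - zeros f) = 0"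
    using zeros_deficit_nonneg \<open>f \<noteq> 0\<close> by (subst (asm) sum_nonneg_eq_0_iff) simp_all
  then show ?thesis
    by simp
qed

lemma col_independent: "p \<noteq> q \<Longrightarrow> col p \<noteq> 0 \<and> col q \<noteq> scale3 s (col p)"
proof -
  assume "p \<noteq> q"
  then have "excess p q = 0"
    by (rule excess_offdiag)
  then have "card {f. dot3 f (col p) = 0} + card {f. dot3 f (col q) = 0} =
      6 * card {f. dot3 f (col p) = 0 \<and> dot3 f (col q) = 0}"
    unfolding excess_def by linarith
  then show ?thesis
    by (rule card_common_annihilator(2))
qed

lemma col_nonzero: "col p \<noteq> 0"
proof -
  have "UNIV \<noteq> {p}"
  proof
    assume "UNIV = {p}"
    then have "CARD('p) = card {p}"
      by (rule arg_cong)
    with card_index show False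
      by simp
  qed
  then obtain q where "q \<noteq> p"
    by blast
  then have "col p \<noteq> scale3 0 (col q)"
    using col_independent by blast
  moreover have "scale3 0 (col q) = 0"
    by (cases "col q" rule: prod_cases3) (simp add: zero_prod_def)
  ultimately show ?thesis
    by simp
qed

lemma sum_zeros: "(\<Sum>f\<in>UNIV. zeros f) = 81"
proof -
  have "(\<Sum>f\<in>UNIV. zeros f) = int (\<Sum>p\<in>UNIV. card {f. dot3 f (col p) = 0})"
    using sum_card_swap[of "\<lambda>f p. dot3 f (col p) = 0"] by (simp add: zeros_def flip: of_nat_sum)
  also have "\<dots> = 81"
    using card_index by (simp add: card_annihilator col_nonzero)
  finally show ?thesis .
qed

lemma exists_nonvanishing_functional: "\<exists>f. f \<noteq> 0 \<and> (\<forall>p. dot3 f (col p) \<noteq> 0)"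
proof (rule ccontr)
  assume none: "\<not> ?thesis"
  have "zeros f = 3" if f: "f \<in> UNIV - {0}" for f
  proof -
    obtain p where "dot3 f (col p) = 0"
      using none f by blast
    then have "card {p. dot3 f (col p) = 0} \<noteq> 0"
      by (subst card_eq_0_iff) auto
    then show ?thesis
      using zeros_0_or_3[of f] f by (auto simp: zeros_def)
  qed
  then have "(\<Sum>f\<in>UNIV - {0}. zeros f) = (\<Sum>f\<in>UNIV - {0 :: f3vec}. 3)"
    by (rule sum.cong[OF refl])
  also have "\<dots> = 78"
  proof -
    have "UNIV - {0 :: f3vec} = {f. f \<noteq> 0}"
      by blast
    then show ?thesis
      using card_nonzero_f3vec by simp
  qed
  finally show False
    using sum_zeros by (simp add: sum.remove[of UNIV 0] zeros_zero)
qed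

(* Scaling each column by s p = \<plusminus>1 puts it on the affine plane dot3 fu n = 1, and the nine
   rescaled columns, being pairwise distinct, fill that plane. *)
lemma affine_labelling:
  obtains lab :: "'p \<Rightarrow> f3 \<times> f3" and s :: "'p \<Rightarrow> f3"
  where "bij lab" and "\<And>p. s p \<noteq> 0"
    and "\<And>a. \<exists>\<phi>. \<forall>p. dot3 \<phi> (col p) = s p * affine_f3 a (lab p)"
proof -
  obtain fu where fu: "fu \<noteq> 0" "\<And>p. dot3 fu (col p) \<noteq> 0"
    using exists_nonvanishing_functional by blast
  obtain fx fy where inj: "inj_on (\<lambda>n. (dot3 fx n, dot3 fy n)) {n. dot3 fu n = 1}"
    using affine_plane_coordinates[OF fu(1)] by blast
  define s where "s p = dot3 fu (col p)" for p
  define lab where "lab p = (s p * dot3 fx (col p), s p * dot3 fy (col p))" for p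
  have s: "s p \<noteq> 0" "s p * s p = 1" for p
    using fu(2) f3_square by (auto simp: s_def)
  have "inj lab"
  proof (rule injI)
    fix p q
    assume "lab p = lab q"
    have mem: "scale3 (s p) (col p) \<in> {n. dot3 fu n = 1}" for p
      using s(2)[of p] by (simp add: dot3_scale3_right s_def)
    have "(dot3 fx (scale3 (s p) (col p)), dot3 fy (scale3 (s p) (col p))) =
        (dot3 fx (scale3 (s q) (col q)), dot3 fy (scale3 (s q) (col q)))"
      using \<open>lab p = lab q\<close> by (simp add: lab_def dot3_scale3_right)
    then have eq: "scale3 (s p) (col p) = scale3 (s q) (col q)"
      by (rule inj_onD[OF inj _ mem mem])
    have "col q = scale3 (s q) (scale3 (s q) (col q))"
      by (simp add: scale3_scale3 s(2) scale3_one)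
    also have "\<dots> = scale3 (s q * s p) (col p)"
      by (simp add: scale3_scale3 flip: eq)
    finally have "col q = scale3 (s q * s p) (col p)" .
    then show "p = q"
      using col_independent by blast
  qed
  moreover have "surj lab"
  proof -
    have "card (range lab) = CARD(f3 \<times> f3)"
      using \<open>inj lab\<close> card_index by (simp add: card_image UNIV_f3 flip: UNIV_Times_UNIV)
    then show ?thesis
      by (simp add: card_subset_eq)
  qed
  moreover have "\<exists>\<phi>. \<forall>p. dot3 \<phi> (col p) = s p * affine_f3 a (lab p)" for a
  proof -
    obtain \<alpha> \<beta> \<gamma> where a: "a = (\<alpha>, \<beta>, \<gamma>)"
      by (cases a rule: prod_cases3)
    have "dot3 (scale3 \<alpha> fx + scale3 \<beta> fy + scale3 \<gamma> fu) (col p) = s p * affine_f3 a (lab p)" for p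
    proof -
      have "s p * affine_f3 a (lab p) =
          (s p * s p) * (\<alpha> * dot3 fx (col p) + \<beta> * dot3 fy (col p)) + \<gamma> * s p"
        by (simp add: a lab_def algebra_simps)
      also have "\<dots> = \<alpha> * dot3 fx (col p) + \<beta> * dot3 fy (col p) + \<gamma> * s p"
        by (simp add: s(2))
      also have "\<dots> = dot3 (scale3 \<alpha> fx + scale3 \<beta> fy + scale3 \<gamma> fu) (col p)"
        by (simp add: dot3_add_left dot3_scale3_left s_def)
      finally show ?thesis ..
    qed
    then show ?thesis
      by blast
  qed
  ultimately show ?thesis
    using s(1) by (intro that[of lab s]) (simp_all add: bij_def)
qed

end

fun f3_ord :: "f3 \<Rightarrow> nat" where
  "f3_ord Z0 = 0" | "f3_ord Z1 = 1" | "f3_ord Z2 = 2"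

definition point_index :: "f3 \<times> f3 \<Rightarrow> nat" where
  "point_index l = 3 * f3_ord (fst l) + f3_ord (snd l)"

lemma UNIV_f3_pair: "(UNIV :: (f3 \<times> f3) set) = set (List.product f3_list f3_list)"
  using mem_f3_list by auto

lemma bij_point_index: "bij_betw point_index UNIV {..<9}"
proof -
  have "map point_index (List.product f3_list f3_list) = [0..<9]"
    by (simp add: f3_list_def point_index_def upt_rec)
  then have "inj_on point_index (set (List.product f3_list f3_list))"
    and "point_index ` set (List.product f3_list f3_list) = {..<9}"
    by (metis distinct_map distinct_upt, metis atLeast0LessThan list.set_map set_upt)
  then show ?thesis
    unfolding bij_betw_def UNIV_f3_pair by blast
qed

definition cert_comb :: "(nat \<Rightarrow> 'a::real_vector) \<Rightarrow> int list \<Rightarrow> 'a" where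
  "cert_comb u ks = (\<Sum>q<9. (of_int (ks ! q) / 3) *\<^sub>R u q)"

(* Each entry (w, ks, a) lists coefficients at the nine points of F_3^2, ordered by point_index,
   congruent mod 3 to the affine function a; for any nine vectors of equal norm m the weighted
   squared norms of the combinations add up to 20 m, while the weights add up to 21. *)
definition certificate :: "(real \<times> int list \<times> f3vec) list" where
  "certificate =
    [(1, [0, 3, 3, 0, 0, 0, 0, 0, 0], (Z0, Z0, Z0)),
     (1, [0, 0, 0, 0, 3, 0, 0, 0, 3], (Z0, Z0, Z0)),
     (1, [0, 0, 0, 0, 0, 3, 0, 3, 0], (Z0, Z0, Z0)),
     (3, [0, 1, -1, 0, 1, -1, 0, 1, -1], (Z0, Z1, Z0)),
     (1, [1, -1, 0, 1, -1, 0, 1, -1, 0], (Z0, Z1, Z1)),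
     (1, [1, -1, 0, 1, -1, 0, 1, 2, 0], (Z0, Z1, Z1)),
     (1, [1, -1, 0, 1, 2, 0, 1, -1, 0], (Z0, Z1, Z1)),
     (1, [1, -1, 0, -2, -1, 0, -2, -1, 0], (Z0, Z1, Z1)),
     (1, [1, 2, 0, 1, -1, 0, 1, -1, 0], (Z0, Z1, Z1)),
     (1, [-2, -1, 0, 1, -1, 0, 1, -1, 0], (Z0, Z1, Z1)),
     (3, [0, 0, 0, 1, 1, 1, -1, -1, -1], (Z1, Z0, Z0)),
     (3, [0, 1, -1, 1, -1, 0, -1, 0, 1], (Z1, Z1, Z0)),
     (3, [0, -1, 1, 1, 0, -1, -1, 1, 0], (Z1, Z2, Z0))]"

lemma certificate_weighted_norms:
  fixes u :: "nat \<Rightarrow> 'a::real_inner"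
  assumes "\<And>q. q < 9 \<Longrightarrow> u q \<bullet> u q = m"
  shows "(\<Sum>(w, ks, a)\<leftarrow>certificate. w * (cert_comb u ks \<bullet> cert_comb u ks)) = 20 * m"
proof -
  have "cert_comb u ks \<bullet> cert_comb u ks =
      (\<Sum>i<9. \<Sum>j<9. (of_int (ks ! i) / 3) * (of_int (ks ! j) / 3) * (u i \<bullet> u j))" for ks
    unfolding cert_comb_def inner_sum_left inner_sum_right
    by (subst sum.swap) (simp add: mult_ac)
  then show ?thesis
    using assms
    by (simp add: certificate_def eval_nat_numeral sum.lessThan_Suc inner_commute algebra_simps)
qed

lemma certificate_short_comb:
  fixes u :: "nat \<Rightarrow> 'a::real_inner"
  assumes "\<And>q. q < 9 \<Longrightarrow> u q \<bullet> u q = m" and "0 < m"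
  shows "\<exists>(w, ks, a)\<in>set certificate. cert_comb u ks \<bullet> cert_comb u ks < m"
proof (rule ccontr)
  assume "\<not> ?thesis"
  then have "(\<Sum>(w, ks, a)\<leftarrow>certificate. w * m) \<le>
      (\<Sum>(w, ks, a)\<leftarrow>certificate. w * (cert_comb u ks \<bullet> cert_comb u ks))"
    by (intro sum_list_mono) (auto simp: certificate_def)
  also have "\<dots> = 20 * m"
    using assms(1) by (rule certificate_weighted_norms)
  finally show False
    using assms(2) by (simp add: certificate_def)
qed

lemma certificate_affine:
  assumes "(w, ks, a) \<in> set certificate"
  shows "3 dvd (ks ! point_index l - lift_f3 (affine_f3 a l))" and "\<exists>q<9. ks ! q \<noteq> 0"
proof -
  have "\<forall>(w, ks, a)\<in>set certificate.
      (\<forall>l\<in>set (List.product f3_list f3_list). (ks ! point_index l - lift_f3 (affine_f3 a l)) mod 3 = 0) \<and>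
      (\<exists>q\<in>set [0..<9]. ks ! q \<noteq> 0)"
    by code_simp
  from bspec[OF this assms]
  have "\<forall>l\<in>set (List.product f3_list f3_list). (ks ! point_index l - lift_f3 (affine_f3 a l)) mod 3 = 0"
    and "\<exists>q\<in>set [0..<9]. ks ! q \<noteq> 0"
    by simp_all
  moreover have "l \<in> set (List.product f3_list f3_list)"
    using UNIV_f3_pair by blast
  ultimately show "3 dvd (ks ! point_index l - lift_f3 (affine_f3 a l))" "\<exists>q<9. ks ! q \<noteq> 0"
    by (auto simp: dvd_eq_mod_eq_0)
qed

lemma (in group) quotient_iso_hom:
  assumes N: "N \<lhd> G" and H: "group H" and h: "h \<in> iso (G Mod N) H"
  shows "(\<lambda>x. h (N #> x)) \<in> hom G H"
    and "x \<in> carrier G \<Longrightarrow> h (N #> x) = \<one>\<^bsub>H\<^esub> \<longleftrightarrow> x \<in> N"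
    and "(\<lambda>x. h (N #> x)) ` carrier G = carrier H"
proof -
  interpret N: normal N G by (rule N)
  have hom: "h \<in> hom (G Mod N) H" and bij: "bij_betw h (carrier (G Mod N)) (carrier H)"
    using h by (auto simp: iso_def)
  interpret h: group_hom "G Mod N" H h
    using hom H N.factorgroup_is_group by (simp add: group_hom_def group_hom_axioms_def)
  show "(\<lambda>x. h (N #> x)) \<in> hom G H"
    using Group.hom_compose[OF N.r_coset_hom_Mod hom] by (simp add: comp_def)
  show "(\<lambda>x. h (N #> x)) ` carrier G = carrier H"
    using bij by (simp add: bij_betw_def carrier_FactGroup image_comp comp_def)
  assume x: "x \<in> carrier G"
  have "N #> x = N \<longleftrightarrow> x \<in> N"
    using rcos_self[OF x N.subgroup_axioms] N.rcos_const[OF is_group] by auto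
  moreover have "N #> x \<in> carrier (G Mod N)"
    using x by (simp add: carrier_FactGroup)
  moreover have "N \<in> carrier (G Mod N)"
    using h.G.one_closed by simp
  ultimately show "h (N #> x) = \<one>\<^bsub>H\<^esub> \<longleftrightarrow> x \<in> N"
    using h.hom_one bij by (auto simp: bij_betw_def inj_on_def)
qed

lemma hom_product_group_proj:
  "i \<in> I \<Longrightarrow> (\<lambda>f. f i) \<in> hom (product_group I G) (G i)"
  by (auto simp: hom_def PiE_iff)

lemma (in group) quotient_iso_coords:
  assumes N: "N \<lhd> G" and h: "h \<in> iso (G Mod N) (product_group I (\<lambda>_. integer_mod_group n))"
  shows "i \<in> I \<Longrightarrow> (\<lambda>x. h (N #> x) i) \<in> hom G (integer_mod_group n)"
    and "x \<in> carrier G \<Longrightarrow> x \<in> N \<longleftrightarrow> (\<forall>i\<in>I. h (N #> x) i = 0)"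
    and "e \<in> (\<Pi>\<^sub>E i\<in>I. carrier (integer_mod_group n)) \<Longrightarrow> \<exists>x\<in>carrier G. \<forall>i\<in>I. h (N #> x) i = e i"
proof -
  note iso = quotient_iso_hom[OF N _ h, simplified]
  show "(\<lambda>x. h (N #> x) i) \<in> hom G (integer_mod_group n)" if "i \<in> I"
    using Group.hom_compose[OF iso(1) hom_product_group_proj[OF that]] by (simp add: comp_def)
  show "x \<in> N \<longleftrightarrow> (\<forall>i\<in>I. h (N #> x) i = 0)" if x: "x \<in> carrier G"
  proof -
    have "h (N #> x) \<in> (\<Pi>\<^sub>E i\<in>I. carrier (integer_mod_group n))"
      using iso(3) x by blast
    then show ?thesis
      using iso(2)[OF x] by (auto simp: PiE_iff fun_eq_iff extensional_def split: if_splits)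
  qed
  show "\<exists>x\<in>carrier G. \<forall>i\<in>I. h (N #> x) i = e i"
    if "e \<in> (\<Pi>\<^sub>E i\<in>I. carrier (integer_mod_group n))"
  proof -
    have "e \<in> (\<lambda>x. h (N #> x)) ` carrier G"
      using that iso(3) by simp
    then show ?thesis
      by auto
  qed
qed

lemma comm_group_add_group_UNIV: "comm_group (add_group (UNIV :: 'a::ab_group_add set))"
proof (rule comm_groupI)
  show "\<exists>y\<in>carrier (add_group UNIV). y \<otimes>\<^bsub>add_group UNIV\<^esub> x = \<one>\<^bsub>add_group UNIV\<^esub>" for x :: 'a
    by (rule bexI[of _ "- x"]) (simp_all add: add_group_def)
qed (simp_all add: add_group_def add.assoc add.commute)

lemma inv_add_group_UNIV: "inv\<^bsub>add_group UNIV\<^esub> x = - (x::'a::ab_group_add)"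
  by (rule group.inv_equality[OF comm_group.axioms(2)[OF comm_group_add_group_UNIV]])
     (simp_all add: add_group_def)

lemma add_group_UNIV_restrict: "(add_group UNIV)\<lparr>carrier := L\<rparr> = add_group L"
  by (simp add: add_group_def)

context
  fixes L :: "'a::ab_group_add set"
  assumes L: "subgroup L (add_group UNIV)"
begin

lemma add_subgroup_zero: "0 \<in> L"
  using subgroup.one_closed[OF L] by (simp add: add_group_def)

lemma add_subgroup_add: "x \<in> L \<Longrightarrow> y \<in> L \<Longrightarrow> x + y \<in> L"
  using subgroup.m_closed[OF L] by (simp add: add_group_def)

lemma add_subgroup_uminus: "x \<in> L \<Longrightarrow> - x \<in> L"
  using subgroup.m_inv_closed[OF L] by (simp add: inv_add_group_UNIV)

lemma comm_group_add_group: "comm_group (add_group L)"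
proof (rule group.group_comm_groupI)
  show "group (add_group L)"
    using subgroup.subgroup_is_group[OF L comm_group.axioms(2)[OF comm_group_add_group_UNIV]]
    by (simp only: add_group_UNIV_restrict)
qed (simp add: add_group_def add.commute)

end

lemma add_subgroup_scaleR_of_nat:
  "subgroup L (add_group UNIV) \<Longrightarrow> x \<in> L \<Longrightarrow> of_nat n *\<^sub>R x \<in> (L :: 'a::real_vector set)"
  by (induction n) (simp_all add: add_subgroup_zero add_subgroup_add scaleR_add_left)

lemma add_subgroup_scaleR_of_int:
  assumes "subgroup L (add_group UNIV)" "x \<in> (L :: 'a::real_vector set)"
  shows "of_int k *\<^sub>R x \<in> L"
proof (cases "k < 0")
  case True
  then have "of_int k *\<^sub>R x = - (of_nat (nat (- k)) *\<^sub>R x)" by simp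
  then show ?thesis using assms add_subgroup_scaleR_of_nat add_subgroup_uminus by metis
next
  case False
  then show ?thesis using assms add_subgroup_scaleR_of_nat[of L x "nat k"] by simp
qed

lemma int_pow_add_group:
  fixes L :: "'a::real_vector set"
  assumes L: "subgroup L (add_group UNIV)" and x: "x \<in> L"
  shows "x [^]\<^bsub>add_group L\<^esub> (k::int) = of_int k *\<^sub>R x"
proof -
  have nat_pow: "x [^]\<^bsub>add_group L\<^esub> n = of_nat n *\<^sub>R x" for n :: nat
    by (induction n) (simp_all add: add_group_def algebra_simps)
  have inv: "inv\<^bsub>add_group L\<^esub> y = - y" if "y \<in> L" for y
    by (rule group.inv_equality[OF comm_group.axioms(2)[OF comm_group_add_group[OF L]]])
       (simp_all add: add_group_def that add_subgroup_uminus[OF L])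
  show ?thesis
    using add_subgroup_scaleR_of_int[OF L x] add_subgroup_uminus[OF L]
    by (cases "k < 0") (simp_all add: int_pow_def2 nat_pow inv)
qed

lemma hom_add_group_integer_mod_group:
  fixes L :: "'a::real_vector set"
  assumes L: "subgroup L (add_group UNIV)" and h: "h \<in> hom (add_group L) (integer_mod_group n)"
    and "x \<in> L" "y \<in> L"
  shows "h (x + y) = (h x + h y) mod int n" and "h (of_int a *\<^sub>R x) = (a * h x) mod int n"
proof -
  show "h (x + y) = (h x + h y) mod int n"
    using hom_mult[OF h, of x y] assms(3,4) by (simp add: add_group_def)
  have "h (x [^]\<^bsub>add_group L\<^esub> a) = h x [^]\<^bsub>integer_mod_group n\<^esub> a"
    using hom_int_pow[OF h] comm_group.axioms(2)[OF comm_group_add_group[OF L]] assms(3)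
    by (simp add: add_group_def)
  then show "h (of_int a *\<^sub>R x) = (a * h x) mod int n"
    by (simp add: int_pow_add_group[OF L assms(3)] int_pow_integer_mod_group)
qed

lemma quotient_Z3_cube_generators:
  fixes L N :: "'a::real_vector set"
  assumes L: "subgroup L (add_group UNIV)" and N: "subgroup N (add_group UNIV)" and "N \<subseteq> L"
    and iso: "add_group L Mod N \<cong> product_group {..<3::nat} (\<lambda>_. integer_mod_group 3)"
  obtains X Y Z where "X \<in> L" "Y \<in> L" "Z \<in> L"
    and "\<And>a b c. of_int a *\<^sub>R X + of_int b *\<^sub>R Y + of_int c *\<^sub>R Z \<in> N \<longleftrightarrow>
                 3 dvd a \<and> 3 dvd b \<and> 3 dvd c"
proof -
  define G where "G = add_group L"
  interpret G: comm_group G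
    using comm_group_add_group[OF L] by (simp add: G_def)
  have "subgroup N G"
    using group.subgroup_incl[OF comm_group.axioms(2)[OF comm_group_add_group_UNIV] N L \<open>N \<subseteq> L\<close>]
    by (simp add: G_def add_group_UNIV_restrict)
  then have normal: "N \<lhd> G"
    by (rule G.subgroup_imp_normal)
  obtain h where h: "h \<in> iso (G Mod N) (product_group {..<3::nat} (\<lambda>_. integer_mod_group 3))"
    using iso by (auto simp: is_iso_def G_def)
  define coord where "coord i x = h (r_coset G N x) i" for i x
  have coord_hom: "coord i \<in> hom (add_group L) (integer_mod_group 3)" if "i < 3" for i
    using G.quotient_iso_coords(1)[OF normal h] that by (simp add: coord_def[abs_def] G_def)
  have ker: "x \<in> N \<longleftrightarrow> (\<forall>i<3. coord i x = 0)" if "x \<in> L" for x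
    using G.quotient_iso_coords(2)[OF normal h, of x] that
    by (simp add: coord_def G_def add_group_def Ball_def)
  have "\<exists>x\<in>L. \<forall>i\<in>{..<3}. coord i x = (if i = j then 1 else 0)" for j
    using G.quotient_iso_coords(3)[OF normal h, of "\<lambda>i\<in>{..<3}. if i = j then 1 else 0"]
    by (simp add: coord_def G_def add_group_def carrier_integer_mod_group)
  note preimage = this
  obtain X where X: "X \<in> L" "\<forall>i\<in>{..<3}. coord i X = (if i = 0 then 1 else 0)"
    using preimage[of 0] by blast
  obtain Y where Y: "Y \<in> L" "\<forall>i\<in>{..<3}. coord i Y = (if i = 1 then 1 else 0)"
    using preimage[of 1] by blast
  obtain Z where Z: "Z \<in> L" "\<forall>i\<in>{..<3}. coord i Z = (if i = 2 then 1 else 0)"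
    using preimage[of 2] by blast
  have XYZ: "X \<in> L" "Y \<in> L" "Z \<in> L"
    by (fact X(1) Y(1) Z(1))+
  have basis: "coord 0 X = 1" "coord 1 X = 0" "coord 2 X = 0" "coord 0 Y = 0" "coord 1 Y = 1"
    "coord 2 Y = 0" "coord 0 Z = 0" "coord 1 Z = 0" "coord 2 Z = 1"
    using X(2) Y(2) Z(2) by (simp_all add: Ball_def)
  have coord_comb: "coord i (of_int a *\<^sub>R X + of_int b *\<^sub>R Y + of_int c *\<^sub>R Z) =
      (a * coord i X + b * coord i Y + c * coord i Z) mod 3" if "i < 3" for i a b c
    using hom_add_group_integer_mod_group[OF L coord_hom[OF that]] XYZ
      add_subgroup_scaleR_of_int[OF L] add_subgroup_add[OF L]
    by (simp add: mod_add_eq)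
  have "(\<forall>i<3. P i) \<longleftrightarrow> P 0 \<and> P 1 \<and> P (2::nat)" for P
    by (auto simp: numeral_3_eq_3 numeral_2_eq_2 less_Suc_eq)
  then have "of_int a *\<^sub>R X + of_int b *\<^sub>R Y + of_int c *\<^sub>R Z \<in> N \<longleftrightarrow>
      3 dvd a \<and> 3 dvd b \<and> 3 dvd c" for a b c
    using XYZ add_subgroup_scaleR_of_int[OF L] add_subgroup_add[OF L] basis
    by (simp add: ker coord_comb dvd_eq_mod_eq_0)
  with XYZ that show ?thesis
    by blast
qed

lemma sum_in_add_subgroup:
  assumes "subgroup L (add_group UNIV)" "\<And>i. i \<in> A \<Longrightarrow> f i \<in> L"
  shows "sum f A \<in> L"
  using assms(2)
  by (induction A rule: infinite_finite_induct)
     (simp_all add: add_subgroup_zero[OF assms(1)] add_subgroup_add[OF assms(1)])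

lemma int_lattice_subgroup: "subgroup (int_lattice b) (add_group UNIV)"
proof (rule group.subgroupI[OF comm_group.axioms(2)[OF comm_group_add_group_UNIV]])
  show "int_lattice b \<noteq> {}"
    by (simp add: int_lattice_def)
  show "inv\<^bsub>add_group UNIV\<^esub> x \<in> int_lattice b" if x: "x \<in> int_lattice b" for x
  proof -
    obtain c where "x = (\<Sum>i\<in>UNIV. of_int (c i) *\<^sub>R b i)"
      using x unfolding int_lattice_def by blast
    then have "inv\<^bsub>add_group UNIV\<^esub> x = (\<Sum>i\<in>UNIV. of_int (- c i) *\<^sub>R b i)"
      by (simp add: inv_add_group_UNIV sum_negf)
    then show ?thesis
      unfolding int_lattice_def by (rule range_eqI[where x = "\<lambda>i. - c i"])
  qed
  show "x \<otimes>\<^bsub>add_group UNIV\<^esub> y \<in> int_lattice b" if xy: "x \<in> int_lattice b" "y \<in> int_lattice b" for x y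
  proof -
    obtain c d where "x = (\<Sum>i\<in>UNIV. of_int (c i) *\<^sub>R b i)" "y = (\<Sum>i\<in>UNIV. of_int (d i) *\<^sub>R b i)"
      using xy unfolding int_lattice_def by blast
    then have "x \<otimes>\<^bsub>add_group UNIV\<^esub> y = (\<Sum>i\<in>UNIV. of_int (c i + d i) *\<^sub>R b i)"
      by (simp add: add_group_def sum.distrib scaleR_add_left)
    then show ?thesis
      unfolding int_lattice_def by (rule range_eqI[where x = "\<lambda>i. c i + d i"])
  qed
qed (simp add: add_group_def)

lemma int_lattice_subset:
  assumes "subgroup L (add_group UNIV)" "\<And>i. b i \<in> L"
  shows "int_lattice b \<subseteq> L"
  using assms by (auto simp: int_lattice_def intro!: sum_in_add_subgroup add_subgroup_scaleR_of_int)

lemma lin_indep_family_coeffs_zero: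
  fixes v :: "'i::finite \<Rightarrow> 'a::real_vector"
  assumes "lin_indep_family v" "(\<Sum>i\<in>UNIV. c i *\<^sub>R v i) = 0"
  shows "c i = 0"
proof -
  have inj: "inj v" and indep: "independent (range v)"
    using assms(1) by (auto simp: lin_indep_family_def)
  have "(\<Sum>x\<in>range v. c (inv_into UNIV v x) *\<^sub>R x) = 0"
    using assms(2) inj by (simp add: sum.reindex)
  then have "c (inv_into UNIV v (v i)) = 0"
    using real_vector.independentD[OF indep, of "range v" "\<lambda>x. c (inv_into UNIV v x)" "v i"]
    by (simp add: finite_imageI)
  then show ?thesis
    using inj by simp
qed

lemma min_vectors_inner_le:
  "x \<in> min_vectors L \<Longrightarrow> w \<in> L \<Longrightarrow> w \<noteq> 0 \<Longrightarrow> x \<bullet> x \<le> w \<bullet> w"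
  by (simp add: min_vectors_def)

lemma min_vectors_inner_eq:
  "x \<in> min_vectors L \<Longrightarrow> y \<in> min_vectors L \<Longrightarrow> x \<bullet> x = y \<bullet> y"
  by (smt (verit) mem_Collect_eq min_vectors_def)

locale min_vector_frame =
  fixes L :: "'a::real_inner set" and v :: "'i::finite \<Rightarrow> 'a"
  assumes subgroup_L: "subgroup L (add_group UNIV)"
    and v_min: "v i \<in> min_vectors L"
    and v_indep: "lin_indep_family v"
begin

lemma v_in_L: "v i \<in> L"
  using v_min by (simp add: min_vectors_def)

lemma v_nonzero: "v i \<noteq> 0"
  using v_min by (simp add: min_vectors_def)

lemma v_inner_eq: "v i \<bullet> v i = v j \<bullet> v j"
  using min_vectors_inner_eq[OF v_min v_min] .

lemma int_lattice_v_subset: "int_lattice v \<subseteq> L"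
  using int_lattice_subset[OF subgroup_L v_in_L] .

definition thirds :: "('i \<Rightarrow> int) \<Rightarrow> 'a" where
  "thirds k = (\<Sum>i\<in>UNIV. (of_int (k i) / 3) *\<^sub>R v i)"

lemma thirds_add: "thirds k + thirds k' = thirds (\<lambda>i. k i + k' i)"
  by (simp add: thirds_def sum.distrib[symmetric] scaleR_add_left add_divide_distrib)

lemma thirds_scale: "of_int a *\<^sub>R thirds k = thirds (\<lambda>i. a * k i)"
  by (simp add: thirds_def scaleR_sum_right)

lemma thirds_eq_zero: "thirds k = 0 \<Longrightarrow> k i = 0"
  using lin_indep_family_coeffs_zero[OF v_indep, of "\<lambda>i. of_int (k i) / 3"]
  by (simp add: thirds_def)

lemma thirds_in_int_lattice_iff: "thirds k \<in> int_lattice v \<longleftrightarrow> (\<forall>i. 3 dvd k i)"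
proof
  assume "thirds k \<in> int_lattice v"
  then obtain c where "thirds k = (\<Sum>i\<in>UNIV. of_int (c i) *\<^sub>R v i)"
    unfolding int_lattice_def by blast
  then have "(\<Sum>i\<in>UNIV. (of_int (k i) / 3 - of_int (c i)) *\<^sub>R v i) = 0"
    by (simp add: thirds_def scaleR_diff_left sum_subtractf)
  then have "of_int (k i) / 3 - of_int (c i) = (0::real)" for i
    by (rule lin_indep_family_coeffs_zero[OF v_indep])
  then have "real_of_int (k i) = real_of_int (3 * c i)" for i
    by simp
  then have "k i = 3 * c i" for i
    using of_int_eq_iff by blast
  then show "\<forall>i. 3 dvd k i"
    by simp
next
  assume "\<forall>i. 3 dvd k i"
  then have "thirds k = (\<Sum>i\<in>UNIV. of_int (k i div 3) *\<^sub>R v i)"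
    by (simp add: thirds_def real_of_int_div)
  then show "thirds k \<in> int_lattice v"
    unfolding int_lattice_def by (rule range_eqI[where x = "\<lambda>i. k i div 3"])
qed

lemma exists_thirds: "3 *\<^sub>R x \<in> int_lattice v \<Longrightarrow> \<exists>k. x = thirds k"
proof -
  assume "3 *\<^sub>R x \<in> int_lattice v"
  then obtain k where eq: "3 *\<^sub>R x = (\<Sum>i\<in>UNIV. of_int (k i) *\<^sub>R v i)"
    unfolding int_lattice_def by blast
  have "x = (1 / 3) *\<^sub>R (3 *\<^sub>R x)"
    by simp
  also have "\<dots> = thirds k"
    unfolding eq by (simp add: thirds_def scaleR_sum_right)
  finally show ?thesis by blast
qed

lemma thirds_cong:
  assumes "thirds k \<in> L" "\<And>i. 3 dvd (k' i - k i)"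
  shows "thirds k' \<in> L"
proof -
  have "thirds (\<lambda>i. k' i - k i) \<in> L"
    using assms(2) thirds_in_int_lattice_iff int_lattice_v_subset by blast
  then have "thirds k + thirds (\<lambda>i. k' i - k i) \<in> L"
    using assms(1) add_subgroup_add[OF subgroup_L] by blast
  then show ?thesis
    by (simp add: thirds_add)
qed

lemma thirds_minus_v:
  "thirds r - of_int (r i) *\<^sub>R v i = thirds (\<lambda>j. if j = i then - 2 * r i else r j)"
proof -
  have "of_int (r i) *\<^sub>R v i = (\<Sum>j\<in>UNIV. (if j = i then of_int (r i) else 0) *\<^sub>R v j)"
    by (simp add: if_distrib[of "\<lambda>c. c *\<^sub>R _"] cong: if_cong)
  then have "thirds r - of_int (r i) *\<^sub>R v i =
      (\<Sum>j\<in>UNIV. (of_int (r j) / 3 - (if j = i then of_int (r i) else 0)) *\<^sub>R v j)"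
    by (simp add: thirds_def sum_subtractf scaleR_diff_left)
  also have "\<dots> = thirds (\<lambda>j. if j = i then - 2 * r i else r j)"
    unfolding thirds_def by (intro sum.cong refl) auto
  finally show ?thesis .
qed

lemma thirds_inner_le:
  assumes W: "thirds r \<in> L" and ri: "r i = 1 \<or> r i = - 1"
  shows "2 * (of_int (r i) * (thirds r \<bullet> v i)) \<le> thirds r \<bullet> thirds r"
proof -
  define W where "W = thirds r"
  have "W - of_int (r i) *\<^sub>R v i \<in> L"
    unfolding W_def thirds_minus_v by (rule thirds_cong[OF W]) auto
  moreover have "W - of_int (r i) *\<^sub>R v i \<noteq> 0"
    unfolding W_def thirds_minus_v using ri thirds_eq_zero[of _ i] by fastforce
  ultimately have "v i \<bullet> v i \<le> (W - of_int (r i) *\<^sub>R v i) \<bullet> (W - of_int (r i) *\<^sub>R v i)"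
    by (rule min_vectors_inner_le[OF v_min])
  also have "\<dots> = W \<bullet> W - 2 * (of_int (r i) * (W \<bullet> v i)) + (of_int (r i))\<^sup>2 * (v i \<bullet> v i)"
    by (simp add: inner_diff_left inner_diff_right inner_commute algebra_simps power2_eq_square)
  also have "(of_int (r i))\<^sup>2 = (1::real)"
    using ri by auto
  finally show ?thesis
    by (simp add: W_def)
qed

lemma thirds_weight:
  assumes W: "thirds r \<in> L" and r: "\<And>i. r i \<in> {-1, 0, 1}" and nz: "r i \<noteq> 0"
  shows "6 \<le> card {i. r i \<noteq> 0}"
proof -
  define W where "W = thirds r"
  have "W \<noteq> 0"
    using nz thirds_eq_zero by (auto simp: W_def)
  then have pos: "W \<bullet> W > 0"
    by simp
  have "W \<bullet> W = W \<bullet> (\<Sum>i\<in>UNIV. (of_int (r i) / 3) *\<^sub>R v i)"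
    by (simp add: W_def thirds_def)
  also have "\<dots> = (\<Sum>i\<in>UNIV. of_int (r i) * (W \<bullet> v i)) / 3"
    by (simp add: inner_sum_right sum_divide_distrib)
  finally have "6 * (W \<bullet> W) = 2 * (\<Sum>i\<in>UNIV. of_int (r i) * (W \<bullet> v i))"
    by simp
  also have "\<dots> = (\<Sum>i\<in>UNIV. 2 * (of_int (r i) * (W \<bullet> v i)))"
    by (simp add: sum_distrib_left)
  also have "\<dots> \<le> (\<Sum>i\<in>UNIV. if r i \<noteq> 0 then W \<bullet> W else 0)"
    using thirds_inner_le[OF W] r by (intro sum_mono) (fastforce simp: W_def)
  also have "\<dots> = of_nat (card {i. r i \<noteq> 0}) * (W \<bullet> W)"
    by (simp add: sum.If_cases)
  finally show ?thesis
    using pos by simp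
qed


definition codeword :: "('i \<Rightarrow> f3) \<Rightarrow> bool" where
  "codeword c \<longleftrightarrow> thirds (\<lambda>i. lift_f3 (c i)) \<in> L"

lemma codeword_iff_thirds:
  assumes "\<And>i. of_int (k i) = c i"
  shows "codeword c \<longleftrightarrow> thirds k \<in> L"
proof -
  have "3 dvd (lift_f3 (c i) - k i)" for i
    using lift_f3_of_int[of "k i"] assms[of i] by simp
  then show ?thesis
    unfolding codeword_def using thirds_cong dvd_diff_commute by metis
qed

lemma codeword_weight:
  assumes "codeword c" "c i \<noteq> 0"
  shows "card {i. c i = 0} + 6 \<le> CARD('i)"
proof -
  have "6 \<le> card {i. lift_f3 (c i) \<noteq> 0}"
    using assms lift_f3_cases unfolding codeword_def by (intro thirds_weight) auto
  moreover have "card {i. c i = 0} + card {i. c i \<noteq> 0} = CARD('i)"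
    by (subst card_Un_disjoint[symmetric]) (auto intro: arg_cong[where f = card])
  ultimately show ?thesis
    by simp
qed

lemma quotient_code_columns:
  assumes XYZ: "X \<in> L" "Y \<in> L" "Z \<in> L"
    and comb: "\<And>a b c. of_int a *\<^sub>R X + of_int b *\<^sub>R Y + of_int c *\<^sub>R Z \<in> int_lattice v \<longleftrightarrow>
                         3 dvd a \<and> 3 dvd b \<and> 3 dvd c"
  obtains col :: "'i \<Rightarrow> f3vec"
  where "\<And>\<phi>. codeword (\<lambda>i. dot3 \<phi> (col i))" and "\<And>\<phi>. \<phi> \<noteq> 0 \<Longrightarrow> \<exists>i. dot3 \<phi> (col i) \<noteq> 0"
proof -
  obtain KX where KX: "X = thirds KX"
    using exists_thirds comb[of 3 0 0] by auto
  obtain KY where KY: "Y = thirds KY"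
    using exists_thirds comb[of 0 3 0] by auto
  obtain KZ where KZ: "Z = thirds KZ"
    using exists_thirds comb[of 0 0 3] by auto
  define col :: "'i \<Rightarrow> f3vec" where "col i = (of_int (KX i), of_int (KY i), of_int (KZ i))" for i
  define k where "k \<phi> i = lift_f3 (fst \<phi>) * KX i + lift_f3 (fst (snd \<phi>)) * KY i + lift_f3 (snd (snd \<phi>)) * KZ i"
    for \<phi> i
  have dot_col: "dot3 \<phi> (col i) = of_int (k \<phi> i)" for \<phi> i
    by (cases \<phi> rule: prod_cases3) (simp add: col_def k_def)
  have thirds_k: "thirds (k (\<alpha>, \<beta>, \<gamma>)) =
      of_int (lift_f3 \<alpha>) *\<^sub>R X + of_int (lift_f3 \<beta>) *\<^sub>R Y + of_int (lift_f3 \<gamma>) *\<^sub>R Z" for \<alpha> \<beta> \<gamma>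
    by (simp add: KX KY KZ thirds_add thirds_scale k_def[abs_def])
  show ?thesis
  proof (rule that)
    fix \<phi> :: f3vec
    obtain \<alpha> \<beta> \<gamma> where \<phi>: "\<phi> = (\<alpha>, \<beta>, \<gamma>)"
      by (cases \<phi> rule: prod_cases3)
    have "thirds (k \<phi>) \<in> L"
      unfolding \<phi> thirds_k using XYZ
      by (intro add_subgroup_add[OF subgroup_L] add_subgroup_scaleR_of_int[OF subgroup_L])
    then show "codeword (\<lambda>i. dot3 \<phi> (col i))"
      by (subst codeword_iff_thirds[of "k \<phi>"]) (simp_all add: dot_col)
    assume "\<phi> \<noteq> 0"
    show "\<exists>i. dot3 \<phi> (col i) \<noteq> 0"
    proof (rule ccontr)
      assume "\<not> (\<exists>i. dot3 \<phi> (col i) \<noteq> 0)"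
      then have "thirds (k \<phi>) \<in> int_lattice v"
        by (simp add: thirds_in_int_lattice_iff dot_col of_int_f3_eq_0_iff)
      then have "3 dvd lift_f3 \<alpha> \<and> 3 dvd lift_f3 \<beta> \<and> 3 dvd lift_f3 \<gamma>"
        using comb by (simp add: \<phi> thirds_k)
      then have "\<alpha> = 0 \<and> \<beta> = 0 \<and> \<gamma> = 0"
        using of_int_f3_eq_0_iff of_int_lift_f3 by metis
      with \<open>\<phi> \<noteq> 0\<close> show False
        by (simp add: \<phi> zero_prod_def)
    qed
  qed
qed

lemma ternary_code_of_columns:
  assumes "CARD('i) = 9" and "\<And>\<phi>. codeword (\<lambda>i. dot3 \<phi> (col i))"
    and "\<And>\<phi>. \<phi> \<noteq> 0 \<Longrightarrow> \<exists>i. dot3 \<phi> (col i) \<noteq> 0"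
  shows "ternary_code_9_3_6 col"
proof
  fix \<phi> :: f3vec
  assume "\<phi> \<noteq> 0"
  then obtain i where "dot3 \<phi> (col i) \<noteq> 0"
    using assms(3) by blast
  then show "card {i. dot3 \<phi> (col i) = 0} \<le> 3"
    using codeword_weight[OF assms(2)] assms(1) by fastforce
qed (fact assms(1))

lemma certificate_thirds_in_L:
  assumes cert: "(w, ks, a) \<in> set certificate"
    and code: "codeword (\<lambda>i. s i * affine_f3 a (lab i))"
  shows "thirds (\<lambda>i. ks ! point_index (lab i) * lift_f3 (s i)) \<in> L"
proof -
  have "of_int (ks ! point_index l) = affine_f3 a l" for l
  proof -
    have "of_int (ks ! point_index l - lift_f3 (affine_f3 a l)) = (0 :: f3)"
      using certificate_affine(1)[OF cert] of_int_f3_eq_0_iff by blast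
    then show ?thesis
      by simp
  qed
  then show ?thesis
    using code by (subst codeword_iff_thirds[symmetric]) (simp_all add: mult.commute)
qed

lemma affine_code_contradiction:
  assumes "bij lab" and s: "\<And>i. s i \<noteq> 0"
    and code: "\<And>a. codeword (\<lambda>i. s i * affine_f3 a (lab i))"
  shows False
proof -
  define idx where "idx i = point_index (lab i)" for i
  have idx: "bij_betw idx UNIV {..<9}"
    using bij_betw_trans[OF \<open>bij lab\<close> bij_point_index] by (simp add: idx_def[abs_def] comp_def)
  define \<pi> where "\<pi> = inv_into UNIV idx"
  have idx_\<pi>: "idx (\<pi> q) = q" if "q < 9" for q
    using idx that by (simp add: \<pi>_def bij_betw_inv_into_right)
  define \<epsilon> where "\<epsilon> i = lift_f3 (s i)" for i
  have \<epsilon>: "\<epsilon> i * \<epsilon> i = 1" for i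
    using lift_f3_mult[of "s i" "s i"] f3_square[OF s] by (simp add: \<epsilon>_def one_f3_def)
  define m where "m = v (\<pi> 0) \<bullet> v (\<pi> 0)"
  define u where "u q = of_int (\<epsilon> (\<pi> q)) *\<^sub>R v (\<pi> q)" for q
  have "u q \<bullet> u q = of_int (\<epsilon> (\<pi> q) * \<epsilon> (\<pi> q)) * (v (\<pi> q) \<bullet> v (\<pi> q))" for q
    by (simp add: u_def)
  then have "u q \<bullet> u q = m" for q
    using \<epsilon> v_inner_eq by (simp add: m_def)
  moreover have "0 < m"
    using v_nonzero by (simp add: m_def)
  ultimately obtain w ks a where cert: "(w, ks, a) \<in> set certificate"
    and short: "cert_comb u ks \<bullet> cert_comb u ks < m"
    using certificate_short_comb by blast
  have "cert_comb u ks = (\<Sum>i\<in>UNIV. (of_int (ks ! idx i) / 3) *\<^sub>R u (idx i))"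
    unfolding cert_comb_def by (rule sum.reindex_bij_betw[OF idx, symmetric])
  also have "\<dots> = thirds (\<lambda>i. ks ! idx i * \<epsilon> i)"
    using idx by (simp add: thirds_def u_def \<pi>_def bij_betw_def)
  finally have comb: "cert_comb u ks = thirds (\<lambda>i. ks ! idx i * \<epsilon> i)" .
  have "thirds (\<lambda>i. ks ! idx i * \<epsilon> i) \<in> L"
    using certificate_thirds_in_L[OF cert code] by (simp add: idx_def \<epsilon>_def)
  moreover have "thirds (\<lambda>i. ks ! idx i * \<epsilon> i) \<noteq> 0"
  proof
    assume zero: "thirds (\<lambda>i. ks ! idx i * \<epsilon> i) = 0"
    obtain q where q: "q < 9" "ks ! q \<noteq> 0"
      using certificate_affine(2)[OF cert] by blast
    have "ks ! idx (\<pi> q) * \<epsilon> (\<pi> q) = 0"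
      using thirds_eq_zero[OF zero] .
    then show False
      using q \<epsilon>[of "\<pi> q"] idx_\<pi>[OF q(1)] by auto
  qed
  ultimately have "m \<le> cert_comb u ks \<bullet> cert_comb u ks"
    unfolding comb m_def by (rule min_vectors_inner_le[OF v_min])
  with short show False
    by simp
qed

lemma no_Z3_cube_quotient:
  assumes card: "CARD('i) = 9"
    and iso: "add_group L Mod int_lattice v \<cong> product_group {..<3::nat} (\<lambda>_. integer_mod_group 3)"
  shows False
proof -
  obtain X Y Z where XYZ: "X \<in> L" "Y \<in> L" "Z \<in> L"
    and comb: "\<And>a b c. of_int a *\<^sub>R X + of_int b *\<^sub>R Y + of_int c *\<^sub>R Z \<in> int_lattice v \<longleftrightarrow>
                   3 dvd a \<and> 3 dvd b \<and> 3 dvd c"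
    using quotient_Z3_cube_generators[OF subgroup_L int_lattice_subgroup int_lattice_v_subset iso]
    by blast
  obtain col where code: "\<And>\<phi>. codeword (\<lambda>i. dot3 \<phi> (col i))"
    and "\<And>\<phi>. \<phi> \<noteq> 0 \<Longrightarrow> \<exists>i. dot3 \<phi> (col i) \<noteq> 0"
    using quotient_code_columns[OF XYZ comb] by blast
  then interpret ternary_code_9_3_6 col
    using card by (intro ternary_code_of_columns) simp_all
  obtain lab s where lab: "bij lab" and s: "\<And>i. s i \<noteq> 0"
    and affine: "\<And>a. \<exists>\<phi>. \<forall>i. dot3 \<phi> (col i) = s i * affine_f3 a (lab i)"
    using affine_labelling by blast
  have "codeword (\<lambda>i. s i * affine_f3 a (lab i))" for a
  proof -
    obtain \<phi> where "\<forall>i. dot3 \<phi> (col i) = s i * affine_f3 a (lab i)"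
      using affine by blast
    then show ?thesis
      using code[of \<phi>] by simp
  qed
  then show False
    by (rule affine_code_contradiction[OF lab s])
qed

end

corollary no_Z3_cube_quotient_of_min_vectors:
  fixes v :: "'i::finite \<Rightarrow> 'a::real_inner"
  assumes "CARD('i) = 9" and "lin_indep_family v" and "\<And>i. v i \<in> min_vectors (int_lattice b)"
  shows "\<not> add_group (int_lattice b) Mod int_lattice v \<cong> product_group {..<3::nat} (\<lambda>_. integer_mod_group 3)"
  using min_vector_frame.no_Z3_cube_quotient[OF min_vector_frame.intro[OF int_lattice_subgroup]] assms
  by blast

theorem lemma7p6:
  shows "\<not> (\<exists>(b :: 9 \<Rightarrow> real^9) (v :: 9 \<Rightarrow> real^9).
            lin_indep_family b \<and>
            well_rounded (int_lattice b) \<and>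
            lin_indep_family v \<and>
            (\<forall>i. v i \<in> min_vectors (int_lattice b)) \<and>
            (add_group (int_lattice b) Mod int_lattice v)
               \<cong> product_group {..<(3::nat)} (\<lambda>_. integer_mod_group 3))"
  using no_Z3_cube_quotient_of_min_vectors[where 'i = 9] by auto

end
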